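(* Let $a_1,\dots,a_k$ be positive integers with $\gcd(a_1,\dots,a_k)=1$, let $\mathit{NR}$ be the (finite) set of positive integers that are not representable, and let $a$ be one of the $a_i$. Let $\mathcal{N}$ be the set of positive integers $n$ such that $n$ is representable and $n-a$ is not representable. Then for every function $f:\mathbb{Z}\to\mathbb{C}$, \[ \sum_{n\in\mathit{NR}}\bigl[f(n+a)-f(n)\bigr]=\sum_{n\in\mathcal{N}}f(n)-\sum_{n=1}^{a-1}f(n). \]
   Context: An integer $n$ is called representable (with respect to $a_1,\dots,a_k$) if $n=\sum_{i=1}^k a_ix_i$ for some nonnegative integers $x_1,\dots,x_k$; in particular $0$ is representable and negative integers are not. *)

theory Defs
  imports Complex_Main
begin

definition representable :: "nat list \<Rightarrow> int \<Rightarrow> bool" where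
  "representable as n \<longleftrightarrow>
     (\<exists>x :: nat list. length x = length as \<and>
        n = (\<Sum>i<length as. int (as ! i) * int (x ! i)))"

definition NR :: "nat list \<Rightarrow> int set" where
  "NR as = {n. n > 0 \<and> \<not> representable as n}"

end

theory Submission
  imports Defs
begin

text \<open>The representable integers form a set S that contains 0, is closed under adding a
  and contains no negative number. Hence, writing G for the gaps (positive integers outside S)
  and N for the positive n in S with n - a not in S, translation by a maps G bijectively onto
  the part of G \<union> N above a, while the part below a is exactly {1, ..., a - 1}. Summing f over
  the two disjoint decompositions of G \<union> N gives the identity. G is finite because by Bezout
  some q and q + 1 are representable, and every n \<ge> (a - 1)(q + 1) can be written as
  t a + r (q + 1) + (a - 1 - r) q with t \<ge> 0 and 0 \<le> r < a.\<close>

lemma representable_iff_combination: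
  "representable as n \<longleftrightarrow> (\<exists>c :: nat \<Rightarrow> nat. n = (\<Sum>i<length as. int (as ! i) * int (c i)))"
proof
  assume "representable as n"
  then show "\<exists>c. n = (\<Sum>i<length as. int (as ! i) * int (c i))"
    unfolding representable_def by blast
next
  assume "\<exists>c. n = (\<Sum>i<length as. int (as ! i) * int (c i))"
  then obtain c where n: "n = (\<Sum>i<length as. int (as ! i) * int (c i))" ..
  have "n = (\<Sum>i<length as. int (as ! i) * int (map c [0..<length as] ! i))"
    unfolding n by (rule sum.cong) auto
  then show "representable as n"
    unfolding representable_def by (intro exI[of _ "map c [0..<length as]"]) simp
qed

lemma representable_combination:
  "representable as (\<Sum>i<length as. int (as ! i) * int (c i))"
  unfolding representable_iff_combination by (rule exI[of _ c]) (rule refl)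

lemma representable_0: "representable as 0"
  using representable_combination[of as "\<lambda>_. 0"] by simp

lemma representable_add:
  assumes "representable as x" and "representable as y"
  shows "representable as (x + y)"
proof -
  obtain c d where "x = (\<Sum>i<length as. int (as ! i) * int (c i))"
    and "y = (\<Sum>i<length as. int (as ! i) * int (d i))"
    using assms unfolding representable_iff_combination by blast
  then have "x + y = (\<Sum>i<length as. int (as ! i) * int (c i + d i))"
    by (simp add: sum.distrib algebra_simps)
  then show ?thesis
    by (simp only: representable_combination)
qed

lemma representable_mult:
  assumes "representable as x"
  shows "representable as (int k * x)"
proof -
  obtain c where "x = (\<Sum>i<length as. int (as ! i) * int (c i))"
    using assms unfolding representable_iff_combination by blast
  then have "int k * x = (\<Sum>i<length as. int (as ! i) * int (k * c i))"
    by (simp add: sum_distrib_left algebra_simps)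
  then show ?thesis
    by (simp only: representable_combination)
qed

lemma representable_generator:
  assumes "b \<in> set as"
  shows "representable as (int b)"
proof -
  obtain j where j: "j < length as" "as ! j = b"
    using assms by (auto simp: in_set_conv_nth)
  have "(\<Sum>i<length as. int (as ! i) * int (if i = j then 1 else 0))
      = (\<Sum>i<length as. if i = j then int (as ! i) else 0)"
    by (rule sum.cong) auto
  also have "\<dots> = int b"
    using j by simp
  finally show ?thesis
    by (metis representable_combination)
qed

lemma representable_nonneg: "representable as n \<Longrightarrow> n \<ge> 0"
  unfolding representable_iff_combination by (auto intro: sum_nonneg)

lemma Gcd_integer_combination:
  "\<exists>c :: nat \<Rightarrow> int. int (Gcd (set as)) = (\<Sum>i<length as. int (as ! i) * c i)"
proof (induction as)
  case Nil
  then show ?case by simp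
next
  case (Cons b bs)
  then obtain c where c: "int (Gcd (set bs)) = (\<Sum>i<length bs. int (bs ! i) * c i)" ..
  obtain u v where "u * int b + v * int (Gcd (set bs)) = gcd (int b) (int (Gcd (set bs)))"
    using bezout_int by blast
  then have "int (Gcd (set (b # bs))) = u * int b + v * int (Gcd (set bs))"
    by (simp add: gcd_int_def)
  also have "\<dots> = (\<Sum>i<length (b # bs).
      int ((b # bs) ! i) * (case i of 0 \<Rightarrow> u | Suc j \<Rightarrow> v * c j))"
    by (simp only: length_Cons sum.lessThan_Suc_shift) (simp add: c sum_distrib_left algebra_simps)
  finally show ?case
    by (rule exI[of _ "\<lambda>i. case i of 0 \<Rightarrow> u | Suc j \<Rightarrow> v * c j"])
qed

lemma representable_consecutive:
  assumes "Gcd (set as) = 1"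
  obtains q where "representable as q" and "representable as (q + 1)"
proof -
  obtain c where c: "1 = (\<Sum>i<length as. int (as ! i) * c i)"
    using Gcd_integer_combination[of as] assms by auto
  define p where "p = (\<Sum>i<length as. int (as ! i) * int (nat (c i)))"
  define q where "q = (\<Sum>i<length as. int (as ! i) * int (nat (- c i)))"
  have "p - q = (\<Sum>i<length as. int (as ! i) * c i)"
    unfolding p_def q_def sum_subtractf[symmetric]
    by (rule sum.cong) (auto simp: algebra_simps)
  then have "p = q + 1"
    using c by simp
  moreover have "representable as p" "representable as q"
    unfolding p_def q_def by (rule representable_combination)+
  ultimately show thesis
    using that by simp
qed

lemma representable_beyond_consecutive:
  assumes q: "representable as q" and q1: "representable as (q + 1)"
    and a: "a \<in> set as" "a > 0"
    and n: "n \<ge> (int a - 1) * (q + 1)"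
  shows "representable as n"
proof -
  define r where "r = (n - (int a - 1) * q) mod int a"
  define t where "t = (n - (int a - 1) * q) div int a"
  have r: "0 \<le> r" "r < int a"
    using a by (auto simp: r_def)
  have "t * int a + r = n - (int a - 1) * q"
    unfolding t_def r_def by simp
  then have n_eq: "n = t * int a + r * (q + 1) + (int a - 1 - r) * q"
    by (simp add: algebra_simps)
  have "t * int a \<ge> 0"
    using n r n_eq representable_nonneg[OF q] by (simp add: algebra_simps)
  then have "t \<ge> 0"
    using a by (simp add: zero_le_mult_iff)
  have "representable as (int (nat t) * int a + int (nat r) * (q + 1) + int (nat (int a - 1 - r)) * q)"
    using representable_generator[OF a(1)] q q1
    by (intro representable_add) (rule representable_mult, assumption)+
  then show ?thesis
    using n_eq r \<open>t \<ge> 0\<close> by simp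
qed

lemma finite_NR:
  assumes "Gcd (set as) = 1"
  shows "finite (NR as)"
proof -
  obtain q where q: "representable as q" "representable as (q + 1)"
    using representable_consecutive assms by blast
  obtain a where a: "a \<in> set as" "a > 0"
    using assms Gcd_0_iff[of "set as"] by fastforce
  have "NR as \<subseteq> {0..(int a - 1) * (q + 1)}"
  proof
    fix n
    assume "n \<in> NR as"
    then have "n > 0" "\<not> representable as n"
      by (auto simp: NR_def)
    then show "n \<in> {0..(int a - 1) * (q + 1)}"
      using representable_beyond_consecutive[OF q a, of n] by fastforce
  qed
  then show ?thesis
    by (rule finite_subset) simp
qed

lemma shifted_gaps_Un:
  fixes S :: "int set" and a :: int
  assumes zero: "0 \<in> S" and shift: "\<And>x. x \<in> S \<Longrightarrow> x + a \<in> S"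
    and nonneg: "\<And>x. x \<in> S \<Longrightarrow> x \<ge> 0"
  shows "(\<lambda>n. n + a) ` {n. n > 0 \<and> n \<notin> S} \<union> {1..a - 1}
       = {n. n > 0 \<and> n \<in> S \<and> n - a \<notin> S} \<union> {n. n > 0 \<and> n \<notin> S}"
    (is "?B \<union> ?I = ?N \<union> ?G")
proof
  have "a \<ge> 0"
    using nonneg[OF shift[OF zero]] by simp
  then show "?B \<union> ?I \<subseteq> ?N \<union> ?G"
    using nonneg[of "_ - a"] by fastforce
next
  show "?N \<union> ?G \<subseteq> ?B \<union> ?I"
  proof
    fix m
    assume m: "m \<in> ?N \<union> ?G"
    show "m \<in> ?B \<union> ?I"
    proof (cases "m < a")
      case True
      with m show ?thesis by auto
    next
      case False
      have "m - a \<notin> S"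
        using m shift[of "m - a"] by auto
      with zero False have "m - a \<in> ?G"
        by (cases "m = a") auto
      then have "m \<in> ?B"
        by (rule rev_image_eqI) simp
      then show ?thesis ..
    qed
  qed
qed

lemma sum_gaps_shift:
  fixes S :: "int set" and a :: int and f :: "int \<Rightarrow> 'b::ab_group_add"
  assumes zero: "0 \<in> S" and shift: "\<And>x. x \<in> S \<Longrightarrow> x + a \<in> S"
    and nonneg: "\<And>x. x \<in> S \<Longrightarrow> x \<ge> 0"
    and finite_gaps: "finite {n. n > 0 \<and> n \<notin> S}"
  shows "(\<Sum>n | n > 0 \<and> n \<notin> S. f (n + a) - f n)
       = (\<Sum>n | n > 0 \<and> n \<in> S \<and> n - a \<notin> S. f n) - (\<Sum>n = 1..a - 1. f n)"
proof -
  define G where "G = {n. n > 0 \<and> n \<notin> S}"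
  define N where "N = {n. n > 0 \<and> n \<in> S \<and> n - a \<notin> S}"
  have Un: "(\<lambda>n. n + a) ` G \<union> {1..a - 1} = N \<union> G"
    unfolding G_def N_def using zero shift nonneg by (rule shifted_gaps_Un)
  have "finite G"
    using finite_gaps by (simp add: G_def)
  then have "finite N"
    using Un by (metis finite_Un finite_atLeastAtMost_int finite_imageI)
  have "(\<lambda>n. n + a) ` G \<inter> {1..a - 1} = {}" and "N \<inter> G = {}"
    by (auto simp: G_def N_def)
  then have "sum f ((\<lambda>n. n + a) ` G) + sum f {1..a - 1} = sum f N + sum f G"
    using \<open>finite G\<close> \<open>finite N\<close> Un by (metis finite_atLeastAtMost_int finite_imageI sum.union_disjoint)
  moreover have "sum f ((\<lambda>n. n + a) ` G) = (\<Sum>n\<in>G. f (n + a))"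
    by (subst sum.reindex) (auto simp: inj_on_def)
  ultimately show ?thesis
    unfolding G_def[symmetric] N_def[symmetric] by (simp add: sum_subtractf algebra_simps)
qed

theorem theorem1:
  fixes as :: "nat list" and a :: nat and f :: "int \<Rightarrow> complex"
  assumes pos: "\<forall>i\<in>set as. i > 0"
    and gcd: "Gcd (set as) = 1"
    and a_in: "a \<in> set as"
  shows "(\<Sum>n\<in>NR as. f (n + int a) - f n) =
         (\<Sum>n\<in>{n. n > 0 \<and> representable as n \<and> \<not> representable as (n - int a)}. f n)
         - (\<Sum>n=1..int a - 1. f n)"
proof -
  have "NR as = {n. n > 0 \<and> n \<notin> Collect (representable as)}"
    by (simp add: NR_def)
  moreover have "finite (NR as)"
    using gcd by (rule finite_NR)
  ultimately show ?thesis
    using sum_gaps_shift[of "Collect (representable as)" "int a" f]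
    by (simp add: representable_0 representable_nonneg representable_add
        representable_generator[OF a_in])
qed

end
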